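(* Let $X=\Delta([a,b])^S$. Then $X$ has the squeezing property, and there is a sequence of unordered pairs $\Sigma_\infty=\{B_i\}_{i\in\mathbf N}$ in $X$ such that $(X,\Sigma_\infty)$ has the countable order property.
   Context: $S$ finite nonempty, $a<b$ reals, $\Delta([a,b])$ the Borel probability measures on $[a,b]$ with the weak topology, $X=\Delta([a,b])^S$ with the product topology. Order on $X$: $f\le g$ iff $g(s)$ first-order stochastically dominates $f(s)$ for every $s$ (i.e. $\int h\,df(s)\le\int h\,dg(s)$ for all bounded continuous nondecreasing $h$). $X$ has the squeezing property if for every sequence $x_n\to x^*$ in $X$ there are an increasing sequence $\{x'_n\}$ and a decreasing sequence $\{x''_n\}$ with $x'_n\le x_n\le x''_n$ and $\lim x'_n=x^*=\lim x''_n$. For a sequence $\Sigma_\infty=\{B_i\}$ of pairs with $B=\bigcup_iB_i$, $(X,\Sigma_\infty)$ has the countable order property if for every $x\in X$ and every neighborhood $V$ of $x$ there are $x',x''\in B\cap V$ with $x'\le x\le x''$. *)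

theory Defs
  imports "HOL-Probability.Probability"
begin

definition Delta :: "real \<Rightarrow> real \<Rightarrow> real measure set" where
  "Delta a b = {M. sets M = sets (restrict_space borel {a..b}) \<and> prob_space M}"

text \<open>Weak topology on Delta a b: the coarsest topology making all maps
  M \<mapsto> integral of h wrt M continuous, h bounded continuous on [a,b]
  (continuity on the compact [a,b] implies boundedness).\<close>
definition weak_top :: "real \<Rightarrow> real \<Rightarrow> real measure topology" where
  "weak_top a b = topology_generated_by
     {{M \<in> Delta a b. (\<integral>x. h x \<partial>M) \<in> U} | (h :: real \<Rightarrow> real) U. continuous_on {a..b} h \<and> open U}"

definition Xtop :: "real \<Rightarrow> real \<Rightarrow> 'i set \<Rightarrow> ('i \<Rightarrow> real measure) topology" where
  "Xtop a b S = product_topology (\<lambda>s. weak_top a b) S"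

definition fosd :: "real \<Rightarrow> real \<Rightarrow> real measure \<Rightarrow> real measure \<Rightarrow> bool" where
  "fosd a b M N \<longleftrightarrow> (\<forall>h :: real \<Rightarrow> real. continuous_on {a..b} h \<and> mono_on {a..b} h
      \<longrightarrow> (\<integral>x. h x \<partial>M) \<le> (\<integral>x. h x \<partial>N))"

definition xle :: "real \<Rightarrow> real \<Rightarrow> 'i set \<Rightarrow> ('i \<Rightarrow> real measure) \<Rightarrow> ('i \<Rightarrow> real measure) \<Rightarrow> bool" where
  "xle a b S f g \<longleftrightarrow> (\<forall>s\<in>S. fosd a b (f s) (g s))"

definition squeezing_property :: "real \<Rightarrow> real \<Rightarrow> 'i set \<Rightarrow> bool" where
  "squeezing_property a b S \<longleftrightarrow>
    (\<forall>x xs. (\<forall>n. xs n \<in> topspace (Xtop a b S)) \<and> x \<in> topspace (Xtop a b S)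
        \<and> limitin (Xtop a b S) xs x sequentially \<longrightarrow>
      (\<exists>xl xu. (\<forall>n. xl n \<in> topspace (Xtop a b S) \<and> xu n \<in> topspace (Xtop a b S))
         \<and> (\<forall>n. xle a b S (xl n) (xl (Suc n)))
         \<and> (\<forall>n. xle a b S (xu (Suc n)) (xu n))
         \<and> (\<forall>n. xle a b S (xl n) (xs n) \<and> xle a b S (xs n) (xu n))
         \<and> limitin (Xtop a b S) xl x sequentially
         \<and> limitin (Xtop a b S) xu x sequentially))"

definition countable_order_property ::
    "real \<Rightarrow> real \<Rightarrow> 'i set \<Rightarrow> (nat \<Rightarrow> ('i \<Rightarrow> real measure) set) \<Rightarrow> bool" where
  "countable_order_property a b S Pairs \<longleftrightarrow>
    (\<forall>x V. x \<in> topspace (Xtop a b S) \<and> openin (Xtop a b S) V \<and> x \<in> V \<longrightarrow>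
       (\<exists>x' x''. x' \<in> (\<Union>i. Pairs i) \<inter> V \<and> x'' \<in> (\<Union>i. Pairs i) \<inter> V
          \<and> xle a b S x' x \<and> xle a b S x x''))"

end

theory Submission
  imports Defs
begin

text \<open>A law on \<open>[a,b]\<close> is determined by its distribution function; first-order stochastic
  dominance is the reverse pointwise order of distribution functions (quantile coupling), and weak
  convergence is convergence of distribution functions at continuity points of the limit. Both
  properties therefore reduce to a single coordinate and to constructions of distribution functions.

  Squeezing: if \<open>x\<^sub>n \<rightarrow> x\<close> weakly, the Levy distance from \<open>x\<^sub>n\<close> to \<open>x\<close> tends to \<open>0\<close>, so it is
  bounded by a decreasing null sequence \<open>d\<^sub>n\<close>. With \<open>G\<close> the distribution function of \<open>x\<close>, the
  functions \<open>min 1 (G (t + d\<^sub>n) + d\<^sub>n)\<close> and \<open>max 0 (G (t - d\<^sub>n) - d\<^sub>n)\<close> enclose the distribution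
  function of \<open>x\<^sub>n\<close>, are monotone in \<open>n\<close> and converge to \<open>G\<close> at its continuity points.

  Countable order property: rounding \<open>G\<close> up, resp. down, to a multiple of \<open>1/N\<close> at the points of a
  grid of mesh \<open>(b - a)/N\<close> gives step distribution functions from a countable family that lie
  above, resp. below, \<open>G\<close> and converge to \<open>G\<close> at its continuity points as \<open>N \<rightarrow> \<infinity>\<close>.\<close>

section \<open>Laws on an interval and their distribution functions\<close>

lemma clamp_real: "a \<le> b \<Longrightarrow> clamp a b = (\<lambda>x::real. max a (min b x))"
  unfolding clamp_def[abs_def] Basis_real_def by auto

lemma continuous_on_clamp_real: "a \<le> b \<Longrightarrow> continuous_on A (clamp a (b::real))"
  unfolding clamp_real by (intro continuous_intros)

text \<open>A law in \<open>Delta a b\<close> lives on the Borel sets of \<open>[a,b]\<close>; \<open>real_law\<close> regards it as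
  a law on the real line, so that the library's \<open>cdf\<close> applies.\<close>
definition real_law :: "real measure \<Rightarrow> real measure" where
  "real_law M = distr M borel (\<lambda>x. x)"

definition interval_cdf :: "real \<Rightarrow> real \<Rightarrow> (real \<Rightarrow> real) \<Rightarrow> bool" where
  "interval_cdf a b G \<longleftrightarrow> mono G \<and> (\<forall>t. continuous (at_right t) G)
     \<and> (\<forall>t<a. G t = 0) \<and> (\<forall>t\<ge>b. G t = 1)"

text \<open>The law with distribution function \<open>G\<close>, moved to \<open>[a,b]\<close> by clamping, which is the
  identity almost everywhere when \<open>G\<close> is an \<open>interval_cdf\<close>.\<close>
definition interval_law :: "real \<Rightarrow> real \<Rightarrow> (real \<Rightarrow> real) \<Rightarrow> real measure" where
  "interval_law a b G = distr (interval_measure G) (restrict_space borel {a..b}) (clamp a b)"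

lemma Delta_sets: "M \<in> Delta a b \<Longrightarrow> sets M = sets (restrict_space borel {a..b})"
  unfolding Delta_def by auto

lemma Delta_space: "M \<in> Delta a b \<Longrightarrow> space M = {a..b}"
  using Delta_sets[THEN sets_eq_imp_space_eq] by (simp add: space_restrict_space)

lemma Delta_prob_space: "M \<in> Delta a b \<Longrightarrow> prob_space M"
  unfolding Delta_def by auto

lemma return_in_Delta: "a \<le> b \<Longrightarrow> return (restrict_space borel {a..b}) a \<in> Delta a b"
  unfolding Delta_def by (auto intro: prob_space_return simp: space_restrict_space)

lemma measurable_ident_Delta: "M \<in> Delta a b \<Longrightarrow> (\<lambda>x. x) \<in> borel_measurable M"
  by (subst measurable_cong_sets[OF Delta_sets refl], assumption)
     (intro measurable_restrict_space1 measurable_ident_sets, simp)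

lemma real_distribution_real_law: "M \<in> Delta a b \<Longrightarrow> real_distribution (real_law M)"
  unfolding real_law_def
  using prob_space.real_distribution_distr[OF Delta_prob_space measurable_ident_Delta] by blast

lemma integral_real_law:
  fixes g :: "real \<Rightarrow> real"
  assumes "M \<in> Delta a b" and "g \<in> borel_measurable borel"
  shows "(\<integral>x. g x \<partial>real_law M) = (\<integral>x. g x \<partial>M)"
  unfolding real_law_def using integral_distr[OF measurable_ident_Delta[OF assms(1)] assms(2)] by simp

lemma cdf_real_law:
  assumes "M \<in> Delta a b" shows "cdf (real_law M) t = measure M ({..t} \<inter> {a..b})"
  unfolding real_law_def cdf_def
  by (subst measure_distr[OF measurable_ident_Delta[OF assms]]) (auto simp: Delta_space[OF assms])

lemma interval_cdf_cdf_real_law: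
  assumes M: "M \<in> Delta a b" shows "interval_cdf a b (cdf (real_law M))"
proof -
  interpret real_distribution "real_law M" by (rule real_distribution_real_law[OF M])
  interpret P: prob_space M by (rule Delta_prob_space[OF M])
  have "cdf (real_law M) t = 1" if "b \<le> t" for t
  proof -
    have "{..t} \<inter> {a..b} = space M" using that Delta_space[OF M] by auto
    then show ?thesis unfolding cdf_real_law[OF M] using P.prob_space by simp
  qed
  moreover have "cdf (real_law M) t = 0" if "t < a" for t
    unfolding cdf_real_law[OF M] using that by simp
  ultimately show ?thesis
    unfolding interval_cdf_def mono_def by (auto intro: cdf_nondecreasing cdf_is_right_cont)
qed

lemma interval_cdf_monoD: "interval_cdf a b F \<Longrightarrow> x \<le> y \<Longrightarrow> F x \<le> F y"
  unfolding interval_cdf_def mono_def by blast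

lemma interval_cdf_outside:
  assumes "interval_cdf a b F" shows "t < a \<Longrightarrow> F t = 0" and "b \<le> t \<Longrightarrow> F t = 1"
  using assms unfolding interval_cdf_def by auto

lemma
  assumes "interval_cdf a b G"
  shows interval_cdf_nonneg: "0 \<le> G t" and interval_cdf_le_1: "G t \<le> 1"
proof -
  have G: "mono G" "G (min t (a - 1)) = 0" "G (max t b) = 1"
    using assms unfolding interval_cdf_def by auto
  show "0 \<le> G t" using monoD[OF G(1), of "min t (a - 1)" t] G(2) by simp
  show "G t \<le> 1" using monoD[OF G(1), of t "max t b"] G(3) by simp
qed

lemma
  assumes ab: "a \<le> b" and G: "interval_cdf a b G"
  shows interval_law_in_Delta: "interval_law a b G \<in> Delta a b"
    and cdf_real_law_interval_law: "cdf (real_law (interval_law a b G)) = G"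
proof -
  let ?\<mu> = "interval_measure G"
  have Gmono: "\<And>x y. x \<le> y \<Longrightarrow> G x \<le> G y" and Grc: "\<And>t. continuous (at_right t) G"
    and Glo: "\<And>t. t < a \<Longrightarrow> G t = 0" and Ghi: "\<And>t. b \<le> t \<Longrightarrow> G t = 1"
    using G unfolding interval_cdf_def mono_def by auto
  have bot: "(G \<longlongrightarrow> 0) at_bot"
    by (rule tendsto_eventually) (auto simp: eventually_at_bot_linorder Glo intro!: exI[of _ "a - 1"])
  have top: "(G \<longlongrightarrow> 1) at_top"
    by (rule tendsto_eventually) (auto simp: eventually_at_top_linorder Ghi intro!: exI[of _ b])
  interpret mu: real_distribution ?\<mu>
    by (rule real_distribution_interval_measure[OF Gmono Grc bot top])
  have mc: "clamp a b \<in> measurable ?\<mu> (restrict_space borel {a..b})"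
  proof (rule measurable_restrict_space2)
    show "clamp a b \<in> space ?\<mu> \<rightarrow> {a..b}" using ab by (auto simp: clamp_real)
    show "clamp a b \<in> borel_measurable ?\<mu>"
      by (subst measurable_cong_sets[OF mu.events_eq_borel refl])
         (rule borel_measurable_continuous_onI[OF continuous_on_clamp_real[OF ab]])
  qed
  show N: "interval_law a b G \<in> Delta a b"
    unfolding Delta_def interval_law_def using mu.prob_space_distr[OF mc] by simp
  show "cdf (real_law (interval_law a b G)) = G"
  proof
    fix t
    have sets: "{..t} \<inter> {a..b} \<in> sets (restrict_space borel {a..b})"
      by (auto simp: sets_restrict_space intro!: image_eqI[of _ _ "{..t}"])
    have pre: "clamp a b -` ({..t} \<inter> {a..b}) = (if t < a then {} else if b \<le> t then UNIV else {..t})"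
      using ab by (auto simp: clamp_real)
    have "cdf (real_law (interval_law a b G)) t = measure (interval_law a b G) ({..t} \<inter> {a..b})"
      by (rule cdf_real_law[OF N])
    also have "\<dots> = measure ?\<mu> (clamp a b -` ({..t} \<inter> {a..b}))"
      unfolding interval_law_def by (subst measure_distr[OF mc sets]) (simp add: mu.space_eq_univ)
    also have "\<dots> = G t"
      unfolding pre using Glo Ghi mu.prob_space measure_interval_measure_Iic[OF Gmono Grc bot]
      by (auto simp: mu.space_eq_univ)
    finally show "cdf (real_law (interval_law a b G)) t = G t" .
  qed
qed

lemma interval_cdf_piecewise:
  fixes f :: "real \<Rightarrow> real"
  assumes ab: "a < b" and mono: "mono_on {a..<b} f"
    and bounds: "\<And>t. a \<le> t \<Longrightarrow> t < b \<Longrightarrow> 0 \<le> f t \<and> f t \<le> 1"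
    and rc: "\<And>t. a \<le> t \<Longrightarrow> t < b \<Longrightarrow> (f \<longlongrightarrow> f t) (at_right t)"
  shows "interval_cdf a b (\<lambda>t. if t < a then 0 else if b \<le> t then 1 else f t)"
    (is "interval_cdf a b ?H")
proof -
  have "?H x \<le> ?H y" if "x \<le> y" for x y
    using that bounds[of x] bounds[of y] mono_onD[OF mono, of x y] by auto
  moreover have "(?H \<longlongrightarrow> ?H t) (at_right t)" for t
  proof -
    consider "t < a" | "a \<le> t" "t < b" | "b \<le> t" by linarith
    then show ?thesis
    proof cases
      case 1
      have "\<forall>\<^sub>F s in at_right t. ?H s = ?H t"
        unfolding eventually_at_right[OF 1] using 1 by (intro exI[of _ a]) auto
      then show ?thesis by (rule tendsto_eventually)
    next
      case 3
      have "\<forall>\<^sub>F s in at_right t. ?H s = ?H t"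
        using eventually_at_right_less[of t] by eventually_elim (use 3 ab in auto)
      then show ?thesis by (rule tendsto_eventually)
    next
      case 2
      have "\<forall>\<^sub>F s in at_right t. f s = ?H s"
        unfolding eventually_at_right[OF 2(2)] using 2 by (intro exI[of _ b]) auto
      with rc[OF 2] show ?thesis using 2 by (auto elim: Lim_transform_eventually)
    qed
  qed
  moreover have "?H t = 0" if "t < a" for t using that by simp
  moreover have "?H t = 1" if "b \<le> t" for t using that ab by simp
  ultimately show ?thesis
    unfolding interval_cdf_def mono_def continuous_within by blast
qed

section \<open>Stochastic dominance and the weak topology through distribution functions\<close>

lemma integral_mono_cdf_le:
  fixes g :: "real \<Rightarrow> real"
  assumes mu: "real_distribution \<mu>" and nu: "real_distribution \<nu>"
    and le: "\<And>t. cdf \<nu> t \<le> cdf \<mu> t" and g: "mono g" "g \<in> borel_measurable borel"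
    and B: "\<And>x. \<bar>g x\<bar> \<le> B"
  shows "(\<integral>x. g x \<partial>\<mu>) \<le> (\<integral>x. g x \<partial>\<nu>)"
proof -
  let ?\<Omega> = "restrict_space lborel {0<..<1::real}"
  interpret A: cdf_distribution \<mu> using mu unfolding cdf_distribution_def .
  interpret B: cdf_distribution \<nu> using nu unfolding cdf_distribution_def .
  let ?Im = "\<lambda>\<omega>. Inf {x. \<omega> \<le> cdf \<mu> x}"
  let ?In = "\<lambda>\<omega>. Inf {x. \<omega> \<le> cdf \<nu> x}"
  have mIm: "?Im \<in> borel_measurable ?\<Omega>"
    using A.measurable_CI by (subst measurable_cong_sets[of _ "restrict_space borel {0<..<1}"]) (auto simp: sets_restrict_space)
  have mIn: "?In \<in> borel_measurable ?\<Omega>"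
    using B.measurable_CI by (subst measurable_cong_sets[of _ "restrict_space borel {0<..<1}"]) (auto simp: sets_restrict_space)
  have igm: "integrable \<mu> g" by (rule A.integrable_const_bound[where B=B]) (use B g in auto)
  have ign: "integrable \<nu> g" by (rule B.integrable_const_bound[where B=B]) (use B g in auto)
  have "(\<integral>x. g x \<partial>\<mu>) = (\<integral>\<omega>. g (?Im \<omega>) \<partial>?\<Omega>)"
    by (subst A.distr_I_eq_M[symmetric]) (rule integral_distr[OF mIm g(2)])
  also have "\<dots> \<le> (\<integral>\<omega>. g (?In \<omega>) \<partial>?\<Omega>)"
  proof (rule integral_mono)
    show "integrable ?\<Omega> (\<lambda>\<omega>. g (?Im \<omega>))"
      using igm by (subst (asm) A.distr_I_eq_M[symmetric]) (simp add: integrable_distr_eq[OF mIm g(2)])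
    show "integrable ?\<Omega> (\<lambda>\<omega>. g (?In \<omega>))"
      using ign by (subst (asm) B.distr_I_eq_M[symmetric]) (simp add: integrable_distr_eq[OF mIn g(2)])
    fix \<omega> assume "\<omega> \<in> space ?\<Omega>"
    then have w: "0 < \<omega>" "\<omega> < 1" by (auto simp: space_restrict_space)
    have "\<omega> \<le> cdf \<nu> (?In \<omega>)" by (rule B.pseudoinverse[OF w, THEN iffD2]) simp
    also have "\<dots> \<le> cdf \<mu> (?In \<omega>)" by (rule le)
    finally have "?Im \<omega> \<le> ?In \<omega>" by (rule A.pseudoinverse[OF w, THEN iffD1])
    then show "g (?Im \<omega>) \<le> g (?In \<omega>)" by (rule monoD[OF g(1)])
  qed
  also have "\<dots> = (\<integral>x. g x \<partial>\<nu>)"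
    by (subst B.distr_I_eq_M[symmetric]) (rule integral_distr[OF mIn g(2), symmetric])
  finally show ?thesis .
qed

lemma
  fixes h :: "real \<Rightarrow> real"
  assumes ab: "a \<le> b" and h: "continuous_on {a..b} h"
  shows continuous_on_comp_clamp: "continuous_on UNIV (\<lambda>x. h (clamp a b x))"
    and bounded_comp_clamp: "\<exists>B. \<forall>x. \<bar>h (clamp a b x)\<bar> \<le> B"
proof -
  show "continuous_on UNIV (\<lambda>x. h (clamp a b x))"
    by (rule continuous_on_compose2[OF h continuous_on_clamp_real[OF ab]]) (use ab in \<open>auto simp: clamp_real\<close>)
  have "compact (h ` {a..b})" by (rule compact_continuous_image[OF h]) simp
  then obtain B where "\<forall>y\<in>h ` {a..b}. norm y \<le> B" using compact_imp_bounded bounded_iff by metis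
  then have "\<bar>h (clamp a b x)\<bar> \<le> B" for x using ab by (auto simp: clamp_real)
  then show "\<exists>B. \<forall>x. \<bar>h (clamp a b x)\<bar> \<le> B" by blast
qed

lemma integral_Delta_eq_clamp:
  fixes h :: "real \<Rightarrow> real"
  assumes M: "M \<in> Delta a b" and ab: "a \<le> b" and h: "continuous_on {a..b} h"
  shows "(\<integral>x. h x \<partial>M) = (\<integral>x. h (clamp a b x) \<partial>real_law M)"
proof -
  have "(\<integral>x. h x \<partial>M) = (\<integral>x. h (clamp a b x) \<partial>M)"
    by (rule Bochner_Integration.integral_cong) (auto simp: Delta_space[OF M] clamp_real[OF ab])
  also have "\<dots> = (\<integral>x. h (clamp a b x) \<partial>real_law M)"
    by (rule integral_real_law[OF M, symmetric])
       (rule borel_measurable_continuous_onI[OF continuous_on_comp_clamp[OF ab h]])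
  finally show ?thesis .
qed

text \<open>The integrands in \<open>fosd\<close> are only monotone on \<open>[a,b]\<close>; composing with the clamp
  extends them to monotone functions on the whole line, to which the quantile coupling applies.\<close>
lemma fosd_if_cdf_le:
  assumes M: "M \<in> Delta a b" and N: "N \<in> Delta a b" and ab: "a \<le> b"
    and le: "\<And>t. cdf (real_law N) t \<le> cdf (real_law M) t"
  shows "fosd a b M N"
  unfolding fosd_def
proof (intro allI impI, elim conjE)
  fix h :: "real \<Rightarrow> real" assume h: "continuous_on {a..b} h" and m: "mono_on {a..b} h"
  obtain B where B: "\<And>x. \<bar>h (clamp a b x)\<bar> \<le> B" using bounded_comp_clamp[OF ab h] by blast
  have "mono (\<lambda>x. h (clamp a b x))"
    by (rule monoI, rule mono_onD[OF m]) (use ab in \<open>auto simp: clamp_real\<close>)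
  then have "(\<integral>x. h (clamp a b x) \<partial>real_law M) \<le> (\<integral>x. h (clamp a b x) \<partial>real_law N)"
    by (rule integral_mono_cdf_le[OF real_distribution_real_law[OF M] real_distribution_real_law[OF N] le _
        borel_measurable_continuous_onI[OF continuous_on_comp_clamp[OF ab h]] B])
  then show "(\<integral>x. h x \<partial>M) \<le> (\<integral>x. h x \<partial>N)"
    by (simp add: integral_Delta_eq_clamp[OF M ab h] integral_Delta_eq_clamp[OF N ab h])
qed

lemma topspace_weak_top: "topspace (weak_top a b) = Delta a b"
  unfolding weak_top_def topology_generated_by_topspace
proof safe
  fix M assume "M \<in> Delta a b"
  then show "M \<in> \<Union>{{M \<in> Delta a b. (\<integral>x. h x \<partial>M) \<in> U} |(h::real\<Rightarrow>real) U. continuous_on {a..b} h \<and> open U}"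
    by (intro UnionI[of "{M \<in> Delta a b. (\<integral>x. 0 \<partial>M) \<in> UNIV}"]) auto
qed

lemma limitin_weak_topI:
  assumes L: "\<And>n. L n \<in> Delta a b" and M: "M \<in> Delta a b"
    and conv: "\<And>h::real\<Rightarrow>real. continuous_on {a..b} h \<Longrightarrow> (\<lambda>n. \<integral>x. h x \<partial>L n) \<longlonglongrightarrow> (\<integral>x. h x \<partial>M)"
  shows "limitin (weak_top a b) L M sequentially"
  unfolding limitin_def topspace_weak_top
proof (intro conjI allI impI M)
  fix U assume "openin (weak_top a b) U \<and> M \<in> U"
  then have "generate_topology_on {{M \<in> Delta a b. (\<integral>x. h x \<partial>M) \<in> U} |(h::real\<Rightarrow>real) U.
      continuous_on {a..b} h \<and> open U} U" and "M \<in> U"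
    unfolding weak_top_def by (auto dest: openin_topology_generated_by)
  then show "\<forall>\<^sub>F n in sequentially. L n \<in> U"
  proof (induction rule: generate_topology_on.induct)
    case (Int A B) then show ?case by (auto intro: eventually_conj elim: eventually_mono)
  next
    case (UN K)
    then obtain k where "k \<in> K" "M \<in> k" "\<forall>\<^sub>F n in sequentially. L n \<in> k" by auto
    then show ?case by (auto elim: eventually_mono)
  next
    case (Basis s)
    then obtain h :: "real \<Rightarrow> real" and V where s: "s = {M \<in> Delta a b. (\<integral>x. h x \<partial>M) \<in> V}"
      and h: "continuous_on {a..b} h" and "open V"
      by auto
    with Basis have "(\<integral>x. h x \<partial>M) \<in> V" by auto
    from topological_tendstoD[OF conv[OF h] \<open>open V\<close> this]
    show ?case using L unfolding s by (auto elim: eventually_mono)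
  qed simp
qed

lemma limitin_weak_topD:
  fixes h :: "real \<Rightarrow> real"
  assumes lim: "limitin (weak_top a b) L M sequentially" and h: "continuous_on {a..b} h"
  shows "(\<lambda>n. \<integral>x. h x \<partial>L n) \<longlonglongrightarrow> (\<integral>x. h x \<partial>M)"
proof (rule topological_tendstoI)
  fix V assume V: "open V" "(\<integral>x. h x \<partial>M) \<in> V"
  let ?W = "{M \<in> Delta a b. (\<integral>x. h x \<partial>M) \<in> V}"
  have "openin (weak_top a b) ?W"
    unfolding weak_top_def by (intro topology_generated_by_Basis CollectI exI[of _ h] exI[of _ V]) (use h V in simp)
  moreover have "M \<in> ?W" using lim V unfolding limitin_def topspace_weak_top by auto
  ultimately have "\<forall>\<^sub>F n in sequentially. L n \<in> ?W" using lim unfolding limitin_def by blast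
  then show "\<forall>\<^sub>F n in sequentially. (\<integral>x. h x \<partial>L n) \<in> V" by (auto elim: eventually_mono)
qed

lemma limitin_weak_top_if_cdf_conv:
  assumes L: "\<And>n. L n \<in> Delta a b" and M: "M \<in> Delta a b" and ab: "a \<le> b"
    and conv: "\<And>t. isCont (cdf (real_law M)) t \<Longrightarrow> (\<lambda>n. cdf (real_law (L n)) t) \<longlonglongrightarrow> cdf (real_law M) t"
  shows "limitin (weak_top a b) L M sequentially"
proof (rule limitin_weak_topI[OF L M])
  fix h :: "real \<Rightarrow> real" assume h: "continuous_on {a..b} h"
  obtain B where B: "\<And>x. \<bar>h (clamp a b x)\<bar> \<le> B" using bounded_comp_clamp[OF ab h] by blast
  have "weak_conv_m (\<lambda>n. real_law (L n)) (real_law M)"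
    unfolding weak_conv_m_def weak_conv_def using conv by blast
  then have "(\<lambda>n. \<integral>x. h (clamp a b x) \<partial>real_law (L n)) \<longlonglongrightarrow> (\<integral>x. h (clamp a b x) \<partial>real_law M)"
    using continuous_on_comp_clamp[OF ab h] B
    by (intro weak_conv_imp_integral_bdd_continuous_conv real_distribution_real_law[OF L]
        real_distribution_real_law[OF M]) (auto simp: continuous_on_eq_continuous_at)
  then show "(\<lambda>n. \<integral>x. h x \<partial>L n) \<longlonglongrightarrow> (\<integral>x. h x \<partial>M)"
    by (simp add: integral_Delta_eq_clamp[OF L ab h] integral_Delta_eq_clamp[OF M ab h])
qed

lemma limitin_interval_law:
  assumes ab: "a \<le> b" and M: "M \<in> Delta a b" and H: "\<And>n. interval_cdf a b (H n)"
    and conv: "\<And>t. isCont (cdf (real_law M)) t \<Longrightarrow> (\<lambda>n. H n t) \<longlonglongrightarrow> cdf (real_law M) t"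
  shows "limitin (weak_top a b) (\<lambda>n. interval_law a b (H n)) M sequentially"
  using conv
  by (intro limitin_weak_top_if_cdf_conv[OF interval_law_in_Delta[OF ab H] M ab])
     (simp add: cdf_real_law_interval_law[OF ab H])

section \<open>Step distribution functions on a uniform grid\<close>

definition grid_point :: "real \<Rightarrow> real \<Rightarrow> nat \<Rightarrow> nat \<Rightarrow> real" where
  "grid_point a b N k = a + real k * (b - a) / real N"

definition grid_index :: "real \<Rightarrow> real \<Rightarrow> nat \<Rightarrow> real \<Rightarrow> nat" where
  "grid_index a b N t = nat \<lfloor>(t - a) * real N / (b - a)\<rfloor>"

definition grid_step :: "real \<Rightarrow> real \<Rightarrow> nat \<Rightarrow> (nat \<Rightarrow> real) \<Rightarrow> real \<Rightarrow> real" where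
  "grid_step a b N c t = (if t < a then 0 else if b \<le> t then 1 else c (grid_index a b N t))"

lemma grid_point_Suc: "grid_point a b N (Suc k) = grid_point a b N k + (b - a) / real N"
  unfolding grid_point_def by (simp add: distrib_right add_divide_distrib)

lemma grid_point_mono: "a < b \<Longrightarrow> k \<le> k' \<Longrightarrow> grid_point a b N k \<le> grid_point a b N k'"
  unfolding grid_point_def by (intro add_left_mono divide_right_mono mult_right_mono) auto

lemma grid_point_le_iff:
  "a < b \<Longrightarrow> 0 < N \<Longrightarrow> grid_point a b N k \<le> t \<longleftrightarrow> real k \<le> (t - a) * real N / (b - a)"
  by (simp add: grid_point_def field_simps)

lemma grid_point_gt_iff:
  "a < b \<Longrightarrow> 0 < N \<Longrightarrow> t < grid_point a b N k \<longleftrightarrow> (t - a) * real N / (b - a) < real k"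
  by (simp add: grid_point_def field_simps)

lemma
  assumes ab: "a < b" and N: "0 < N" and t: "a \<le> t" "t < b"
  shows grid_index_less: "grid_index a b N t < N"
    and grid_point_index_le: "grid_point a b N (grid_index a b N t) \<le> t"
    and less_grid_point_Suc_index: "t < grid_point a b N (Suc (grid_index a b N t))"
proof -
  let ?y = "(t - a) * real N / (b - a)"
  have jr: "real (grid_index a b N t) = of_int \<lfloor>?y\<rfloor>" unfolding grid_index_def using ab t N by simp
  have fl: "of_int \<lfloor>?y\<rfloor> \<le> ?y" "?y < of_int \<lfloor>?y\<rfloor> + 1" using floor_correct[of ?y] by auto
  have le: "real (grid_index a b N t) \<le> ?y" using jr fl(1) by linarith
  have lt: "?y < real (Suc (grid_index a b N t))" using jr fl(2) by (simp only: of_nat_Suc)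
  have "?y < real N" using ab t N by (simp add: field_simps)
  then show "grid_index a b N t < N" using le by linarith
  show "grid_point a b N (grid_index a b N t) \<le> t" using le grid_point_le_iff[OF ab N] by blast
  show "t < grid_point a b N (Suc (grid_index a b N t))" using lt grid_point_gt_iff[OF ab N] by blast
qed

lemma grid_index_mono: "a < b \<Longrightarrow> t \<le> s \<Longrightarrow> grid_index a b N t \<le> grid_index a b N s"
  unfolding grid_index_def by (intro nat_mono floor_mono divide_right_mono mult_right_mono) auto

lemma grid_index_eq:
  assumes ab: "a < b" and N: "0 < N"
    and "a \<le> t" "t \<le> s" "s < grid_point a b N (Suc (grid_index a b N t))"
  shows "grid_index a b N s = grid_index a b N t"
proof -
  let ?y = "(t - a) * real N / (b - a)" and ?z = "(s - a) * real N / (b - a)"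
  have j: "real (grid_index a b N t) = of_int \<lfloor>?y\<rfloor>" unfolding grid_index_def using ab assms N by simp
  have "?y \<le> ?z" using ab N assms by (simp add: divide_right_mono mult_right_mono)
  moreover have "?z < real (Suc (grid_index a b N t))" using assms(5) grid_point_gt_iff[OF ab N] by blast
  ultimately have "\<lfloor>?z\<rfloor> = \<lfloor>?y\<rfloor>" using j by (simp add: floor_eq_iff) linarith
  then show ?thesis unfolding grid_index_def by simp
qed

lemma grid_step_cong:
  assumes "a < b" "0 < N" "\<And>j. j < N \<Longrightarrow> c j = c' j"
  shows "grid_step a b N c = grid_step a b N c'"
  using assms grid_index_less unfolding grid_step_def by fastforce

lemma interval_cdf_grid_step:
  assumes ab: "a < b" and N: "0 < N" and mono: "mono_on {..<N} c"
    and bounds: "\<And>j. j < N \<Longrightarrow> 0 \<le> c j \<and> c j \<le> 1"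
  shows "interval_cdf a b (grid_step a b N c)"
  unfolding grid_step_def[abs_def]
proof (rule interval_cdf_piecewise[OF ab])
  show "mono_on {a..<b} (\<lambda>t. c (grid_index a b N t))"
    by (intro mono_onI mono_onD[OF mono] grid_index_mono[OF ab])
       (auto intro: grid_index_less[OF ab N])
  fix t assume t: "a \<le> t" "t < b"
  then show "0 \<le> c (grid_index a b N t) \<and> c (grid_index a b N t) \<le> 1"
    by (intro bounds grid_index_less[OF ab N])
  have "\<forall>\<^sub>F s in at_right t. c (grid_index a b N s) = c (grid_index a b N t)"
    unfolding eventually_at_right[OF less_grid_point_Suc_index[OF ab N t]]
  proof (intro exI[of _ "grid_point a b N (Suc (grid_index a b N t))"] conjI allI impI)
    fix s assume "t < s" "s < grid_point a b N (Suc (grid_index a b N t))"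
    then have "grid_index a b N s = grid_index a b N t" by (intro grid_index_eq[OF ab N t(1)]) auto
    then show "c (grid_index a b N s) = c (grid_index a b N t)" by simp
  qed (rule less_grid_point_Suc_index[OF ab N t])
  then show "((\<lambda>t. c (grid_index a b N t)) \<longlongrightarrow> c (grid_index a b N t)) (at_right t)"
    by (rule tendsto_eventually)
qed

lemma LIMSEQ_if_close:
  fixes x y :: "nat \<Rightarrow> real"
  assumes close: "\<And>n. \<bar>x n - y n\<bar> \<le> c / real (Suc n)" and y: "y \<longlonglongrightarrow> l"
  shows "x \<longlonglongrightarrow> l"
proof -
  have "(\<lambda>n. x n - y n) \<longlonglongrightarrow> 0"
    by (rule Lim_null_comparison[OF always_eventually LIMSEQ_Suc[OF lim_const_over_n[of c]]])
       (unfold real_norm_def, rule allI, rule close)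
  from tendsto_add[OF this y] show ?thesis by simp
qed

definition round_up :: "nat \<Rightarrow> real \<Rightarrow> real" where
  "round_up N y = real_of_int \<lceil>real N * y\<rceil> / real N"

definition round_down :: "nat \<Rightarrow> real \<Rightarrow> real" where
  "round_down N y = real_of_int \<lfloor>real N * y\<rfloor> / real N"

lemma mono_round_up: "mono (round_up N)"
  unfolding round_up_def mono_def by (auto intro!: divide_right_mono ceiling_mono mult_left_mono)

lemma mono_round_down: "mono (round_down N)"
  unfolding round_down_def mono_def by (auto intro!: divide_right_mono floor_mono mult_left_mono)

lemma
  assumes N: "0 < N"
  shows round_up_ge: "y \<le> round_up N y"
    and round_up_le: "round_up N y \<le> y + 1 / real N"
    and round_down_le: "round_down N y \<le> y"
    and round_down_ge: "y - 1 / real N \<le> round_down N y"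
proof -
  have c: "real N * y \<le> of_int \<lceil>real N * y\<rceil>" "of_int \<lceil>real N * y\<rceil> \<le> real N * y + 1"
    using ceiling_correct[of "real N * y"] by auto
  have f: "of_int \<lfloor>real N * y\<rfloor> \<le> real N * y" "real N * y - 1 \<le> of_int \<lfloor>real N * y\<rfloor>"
    using floor_correct[of "real N * y"] by auto
  have "y = real N * y / real N" "y + 1 / real N = (real N * y + 1) / real N"
    "y - 1 / real N = (real N * y - 1) / real N"
    using N by (simp_all add: field_simps)
  then show "y \<le> round_up N y" "round_up N y \<le> y + 1 / real N"
    "round_down N y \<le> y" "y - 1 / real N \<le> round_down N y"
    unfolding round_up_def round_down_def using c f by (metis divide_right_mono of_nat_0_le_iff)+
qed

lemma
  assumes "0 < N" "0 \<le> y" "y \<le> 1"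
  shows round_up_unit: "0 \<le> round_up N y \<and> round_up N y \<le> 1"
    and round_down_unit: "0 \<le> round_down N y \<and> round_down N y \<le> 1"
proof -
  have "\<lceil>real N * y\<rceil> \<le> int N" "0 \<le> \<lfloor>real N * y\<rfloor>"
    using assms by (auto simp: ceiling_le_iff mult_left_le)
  then have "round_up N y \<le> 1" "0 \<le> round_down N y"
    using assms by (auto simp: round_up_def round_down_def)
  then show "0 \<le> round_up N y \<and> round_up N y \<le> 1" "0 \<le> round_down N y \<and> round_down N y \<le> 1"
    using assms round_up_ge[of N y] round_down_le[of N y] by auto
qed

definition grid_laws :: "real \<Rightarrow> real \<Rightarrow> real measure set" where
  "grid_laws a b = (\<lambda>(N, ks). interval_law a b (grid_step a b N (\<lambda>j. real_of_int (ks ! j) / real N))) ` UNIV"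

lemma countable_grid_laws: "countable (grid_laws a b)"
  unfolding grid_laws_def by simp

lemma interval_law_grid_step_in_grid_laws:
  assumes "a < b" "0 < N"
  shows "interval_law a b (grid_step a b N (\<lambda>j. real_of_int (k j) / real N)) \<in> grid_laws a b"
  unfolding grid_laws_def
  by (rule rev_image_eqI[of "(N, map k [0..<N])"]) (auto intro!: arg_cong[of _ _ "interval_law a b"] grid_step_cong[OF assms])

definition grid_upper_cdf :: "real \<Rightarrow> real \<Rightarrow> (real \<Rightarrow> real) \<Rightarrow> nat \<Rightarrow> real \<Rightarrow> real" where
  "grid_upper_cdf a b F N = grid_step a b N (\<lambda>j. round_up N (F (grid_point a b N (Suc j))))"

definition grid_lower_cdf :: "real \<Rightarrow> real \<Rightarrow> (real \<Rightarrow> real) \<Rightarrow> nat \<Rightarrow> real \<Rightarrow> real" where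
  "grid_lower_cdf a b F N = grid_step a b N (\<lambda>j. round_down N (F (grid_point a b N j)))"

lemma
  assumes "a < b" "0 < N"
  shows interval_law_grid_upper_cdf_in_grid_laws: "interval_law a b (grid_upper_cdf a b F N) \<in> grid_laws a b"
    and interval_law_grid_lower_cdf_in_grid_laws: "interval_law a b (grid_lower_cdf a b F N) \<in> grid_laws a b"
  unfolding grid_upper_cdf_def grid_lower_cdf_def round_up_def round_down_def
  by (rule interval_law_grid_step_in_grid_laws[OF assms])+

context
  fixes a b :: real and F :: "real \<Rightarrow> real"
  assumes ab: "a < b" and F: "interval_cdf a b F"
begin

lemma interval_cdf_grid_upper_cdf: "0 < N \<Longrightarrow> interval_cdf a b (grid_upper_cdf a b F N)"
  unfolding grid_upper_cdf_def
  by (intro interval_cdf_grid_step[OF ab] mono_onI monoD[OF mono_round_up] interval_cdf_monoD[OF F] grid_point_mono[OF ab]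
      round_up_unit interval_cdf_nonneg[OF F] interval_cdf_le_1[OF F]) auto

lemma interval_cdf_grid_lower_cdf: "0 < N \<Longrightarrow> interval_cdf a b (grid_lower_cdf a b F N)"
  unfolding grid_lower_cdf_def
  by (intro interval_cdf_grid_step[OF ab] mono_onI monoD[OF mono_round_down] interval_cdf_monoD[OF F] grid_point_mono[OF ab]
      round_down_unit interval_cdf_nonneg[OF F] interval_cdf_le_1[OF F]) auto

lemma grid_upper_cdf_ge:
  assumes N: "0 < N" shows "F t \<le> grid_upper_cdf a b F N t"
proof (cases "a \<le> t \<and> t < b")
  case True
  then have "F t \<le> F (grid_point a b N (Suc (grid_index a b N t)))"
    using less_grid_point_Suc_index[OF ab N, of t] by (intro interval_cdf_monoD[OF F]) auto
  also have "\<dots> \<le> grid_upper_cdf a b F N t"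
    using True round_up_ge[OF N] by (simp add: grid_upper_cdf_def grid_step_def)
  finally show ?thesis .
qed (use interval_cdf_outside[OF F] interval_cdf_nonneg[OF F] interval_cdf_le_1[OF F] in \<open>auto simp: grid_upper_cdf_def grid_step_def\<close>)

lemma grid_lower_cdf_le:
  assumes N: "0 < N" shows "grid_lower_cdf a b F N t \<le> F t"
proof (cases "a \<le> t \<and> t < b")
  case True
  then have "grid_lower_cdf a b F N t \<le> F (grid_point a b N (grid_index a b N t))"
    using round_down_le[OF N] by (simp add: grid_lower_cdf_def grid_step_def)
  also have "\<dots> \<le> F t"
    using True by (intro interval_cdf_monoD[OF F] grid_point_index_le[OF ab N]) auto
  finally show ?thesis .
qed (use interval_cdf_outside[OF F] interval_cdf_nonneg[OF F] interval_cdf_le_1[OF F] in \<open>auto simp: grid_lower_cdf_def grid_step_def\<close>)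

lemma grid_upper_cdf_tendsto: "(\<lambda>n. grid_upper_cdf a b F (Suc n) t) \<longlonglongrightarrow> F t"
proof (cases "a \<le> t \<and> t < b")
  case True
  define u where "u n = grid_point a b (Suc n) (Suc (grid_index a b (Suc n) t))" for n
  have u: "t < u n" "u n \<le> t + (b - a) / real (Suc n)" for n
    using True less_grid_point_Suc_index[OF ab, of "Suc n" t] grid_point_index_le[OF ab, of "Suc n" t]
    by (auto simp: u_def grid_point_Suc)
  have "\<bar>u n - t\<bar> \<le> (b - a) / real (Suc n)" for n
    using u[of n] unfolding abs_le_iff by linarith
  then have "u \<longlonglongrightarrow> t" by (rule LIMSEQ_if_close) simp
  then have "filterlim u (at_right t) sequentially"
    by (rule tendsto_imp_filterlim_at_right) (use u in auto)
  then have Fu: "(\<lambda>n. F (u n)) \<longlonglongrightarrow> F t"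
    using F unfolding interval_cdf_def continuous_within by (blast intro: filterlim_compose)
  show ?thesis
  proof (rule LIMSEQ_if_close[OF _ Fu, of _ 1])
    fix n
    have "grid_upper_cdf a b F (Suc n) t = round_up (Suc n) (F (u n))"
      using True by (simp add: grid_upper_cdf_def grid_step_def u_def)
    then show "\<bar>grid_upper_cdf a b F (Suc n) t - F (u n)\<bar> \<le> 1 / real (Suc n)"
      using round_up_ge[of "Suc n" "F (u n)"] round_up_le[of "Suc n" "F (u n)"] by simp
  qed
qed (use ab interval_cdf_outside[OF F] in \<open>auto simp: grid_upper_cdf_def grid_step_def\<close>)

lemma grid_lower_cdf_tendsto:
  assumes "isCont F t" shows "(\<lambda>n. grid_lower_cdf a b F (Suc n) t) \<longlonglongrightarrow> F t"
proof (cases "a \<le> t \<and> t < b")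
  case True
  define u where "u n = grid_point a b (Suc n) (grid_index a b (Suc n) t)" for n
  have u: "u n \<le> t" "t - (b - a) / real (Suc n) \<le> u n" for n
    using True less_grid_point_Suc_index[OF ab, of "Suc n" t] grid_point_index_le[OF ab, of "Suc n" t]
    by (auto simp: u_def grid_point_Suc)
  have "\<bar>u n - t\<bar> \<le> (b - a) / real (Suc n)" for n
    using u[of n] unfolding abs_le_iff by linarith
  then have "u \<longlonglongrightarrow> t" by (rule LIMSEQ_if_close) simp
  then have Fu: "(\<lambda>n. F (u n)) \<longlonglongrightarrow> F t"
    using assms by (rule isCont_tendsto_compose[rotated])
  show ?thesis
  proof (rule LIMSEQ_if_close[OF _ Fu, of _ 1])
    fix n
    have "grid_lower_cdf a b F (Suc n) t = round_down (Suc n) (F (u n))"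
      using True by (simp add: grid_lower_cdf_def grid_step_def u_def)
    then show "\<bar>grid_lower_cdf a b F (Suc n) t - F (u n)\<bar> \<le> 1 / real (Suc n)"
      using round_down_le[of "Suc n" "F (u n)"] round_down_ge[of "Suc n" "F (u n)"] by simp
  qed
qed (use ab interval_cdf_outside[OF F] in \<open>auto simp: grid_lower_cdf_def grid_step_def\<close>)

end

section \<open>Uniform Levy bounds along a weakly convergent sequence\<close>

definition levy_close :: "(real \<Rightarrow> real) \<Rightarrow> (real \<Rightarrow> real) \<Rightarrow> real \<Rightarrow> bool" where
  "levy_close F G \<delta> \<longleftrightarrow> (\<forall>t. G (t - \<delta>) - \<delta> \<le> F t \<and> F t \<le> G (t + \<delta>) + \<delta>)"

lemma levy_close_1:
  assumes "interval_cdf a b F" "interval_cdf a b G" shows "levy_close F G 1"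
  using assms interval_cdf_nonneg interval_cdf_le_1 unfolding levy_close_def by (smt (verit))

lemma tendsto_integral_cts_step:
  assumes lim: "limitin (weak_top a b) L M sequentially"
    and L: "\<And>n. L n \<in> Delta a b" and M: "M \<in> Delta a b" and xy: "x < y"
  shows "(\<lambda>n. \<integral>z. cts_step x y z \<partial>real_law (L n)) \<longlonglongrightarrow> (\<integral>z. cts_step x y z \<partial>real_law M)"
proof -
  have cont: "continuous_on UNIV (cts_step x y)"
    by (rule uniformly_continuous_imp_continuous[OF cts_step_uniformly_continuous[OF xy]])
  then have "cts_step x y \<in> borel_measurable borel" by (rule borel_measurable_continuous_onI)
  then show ?thesis
    using limitin_weak_topD[OF lim continuous_on_subset[OF cont]]
    by (simp add: integral_real_law[OF L] integral_real_law[OF M])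
qed

lemma eventually_cdf_near:
  assumes lim: "limitin (weak_top a b) L M sequentially"
    and L: "\<And>n. L n \<in> Delta a b" and M: "M \<in> Delta a b" and \<eta>: "0 < \<eta>"
  shows "\<forall>\<^sub>F n in sequentially. cdf (real_law M) (s - \<eta>) - \<eta> \<le> cdf (real_law (L n)) s
    \<and> cdf (real_law (L n)) s \<le> cdf (real_law M) (s + \<eta>) + \<eta>"
proof (rule eventually_conj)
  note cts = real_distribution.cdf_cts_step[OF real_distribution_real_law]
  have lo: "s - \<eta> < s" and hi: "s < s + \<eta>" using \<eta> by simp_all
  let ?lo = "\<lambda>N. \<integral>z. cts_step (s - \<eta>) s z \<partial>N" and ?hi = "\<lambda>N. \<integral>z. cts_step s (s + \<eta>) z \<partial>N"
  have "\<forall>\<^sub>F n in sequentially. ?lo (real_law M) - \<eta> < ?lo (real_law (L n))"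
    by (rule order_tendstoD(1)[OF tendsto_integral_cts_step[OF lim L M lo]]) (use \<eta> in simp)
  then show "\<forall>\<^sub>F n in sequentially. cdf (real_law M) (s - \<eta>) - \<eta> \<le> cdf (real_law (L n)) s"
  proof (rule eventually_mono)
    fix n assume "?lo (real_law M) - \<eta> < ?lo (real_law (L n))"
    with cts(1)[OF M lo] cts(2)[OF L lo, of n]
    show "cdf (real_law M) (s - \<eta>) - \<eta> \<le> cdf (real_law (L n)) s" by linarith
  qed
  have "\<forall>\<^sub>F n in sequentially. ?hi (real_law (L n)) < ?hi (real_law M) + \<eta>"
    by (rule order_tendstoD(2)[OF tendsto_integral_cts_step[OF lim L M hi]]) (use \<eta> in simp)
  then show "\<forall>\<^sub>F n in sequentially. cdf (real_law (L n)) s \<le> cdf (real_law M) (s + \<eta>) + \<eta>"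
  proof (rule eventually_mono)
    fix n assume "?hi (real_law (L n)) < ?hi (real_law M) + \<eta>"
    with cts(2)[OF M hi] cts(1)[OF L hi, of n]
    show "cdf (real_law (L n)) s \<le> cdf (real_law M) (s + \<eta>) + \<eta>" by linarith
  qed
qed

text \<open>Monotonicity propagates the bounds from a grid of mesh \<open>\<eta>\<close> to all points, at the price of
  doubling \<open>\<eta>\<close>.\<close>
lemma levy_close_if_grid:
  assumes ab: "a < b" and F: "interval_cdf a b F" and G: "interval_cdf a b G"
    and N: "0 < N" and mesh: "(b - a) / real N \<le> \<eta>"
    and grid: "\<And>k. k \<le> N \<Longrightarrow> G (grid_point a b N k - \<eta>) - \<eta> \<le> F (grid_point a b N k)
      \<and> F (grid_point a b N k) \<le> G (grid_point a b N k + \<eta>) + \<eta>"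
  shows "levy_close F G (2 * \<eta>)"
  unfolding levy_close_def
proof
  fix t
  have \<eta>: "0 \<le> \<eta>" using mesh ab N by (smt (verit) divide_nonneg_nonneg of_nat_0_le_iff)
  note Fm = interval_cdf_monoD[OF F] and Gm = interval_cdf_monoD[OF G]
  consider "t < a" | "a \<le> t" "t < b" | "b \<le> t" by linarith
  then show "G (t - 2 * \<eta>) - 2 * \<eta> \<le> F t \<and> F t \<le> G (t + 2 * \<eta>) + 2 * \<eta>"
  proof cases
    case 1
    then show ?thesis
      using \<eta> interval_cdf_outside(1)[OF F] interval_cdf_outside(1)[OF G, of "t - 2 * \<eta>"]
        interval_cdf_nonneg[OF G, of "t + 2 * \<eta>"] by simp
  next
    case 3
    then show ?thesis
      using \<eta> interval_cdf_outside(2)[OF F] interval_cdf_outside(2)[OF G, of "t + 2 * \<eta>"]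
        interval_cdf_le_1[OF G, of "t - 2 * \<eta>"] by simp
  next
    case inner: 2
    let ?j = "grid_index a b N t"
    let ?p = "grid_point a b N ?j" and ?q = "grid_point a b N (Suc ?j)"
    have j: "?j < N" "?p \<le> t" "t < ?q" "?q \<le> ?p + \<eta>"
      using grid_index_less[OF ab N inner] grid_point_index_le[OF ab N inner]
        less_grid_point_Suc_index[OF ab N inner] mesh by (auto simp: grid_point_Suc)
    have "G (t - 2 * \<eta>) - 2 * \<eta> \<le> G (?p - \<eta>) - \<eta>" using j \<eta> Gm[of "t - 2 * \<eta>" "?p - \<eta>"] by simp
    also have "\<dots> \<le> F ?p" using grid[of ?j] j by simp
    also have "\<dots> \<le> F t" using j by (intro Fm)
    finally have "G (t - 2 * \<eta>) - 2 * \<eta> \<le> F t" .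
    moreover have "F t \<le> F ?q" using j by (intro Fm) simp
    moreover have "F ?q \<le> G (?q + \<eta>) + \<eta>" using grid[of "Suc ?j"] j by simp
    moreover have "G (?q + \<eta>) \<le> G (t + 2 * \<eta>)" using j \<eta> by (intro Gm) simp
    ultimately show ?thesis using \<eta> by simp
  qed
qed

lemma eventually_levy_close:
  assumes ab: "a < b" and lim: "limitin (weak_top a b) L M sequentially"
    and L: "\<And>n. L n \<in> Delta a b" and M: "M \<in> Delta a b" and \<delta>: "0 < \<delta>"
  shows "\<forall>\<^sub>F n in sequentially. levy_close (cdf (real_law (L n))) (cdf (real_law M)) \<delta>"
proof -
  define \<eta> where "\<eta> = \<delta> / 2"
  define N where "N = Suc (nat \<lceil>(b - a) / \<eta>\<rceil>)"
  have \<eta>: "0 < \<eta>" and N: "0 < N" using \<delta> by (simp_all add: \<eta>_def N_def)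
  have "(b - a) / \<eta> \<le> real N" unfolding N_def using real_nat_ceiling_ge[of "(b - a) / \<eta>"] by simp
  then have mesh: "(b - a) / real N \<le> \<eta>" using \<eta> N ab by (simp add: field_simps)
  have "\<forall>\<^sub>F n in sequentially. \<forall>k\<in>{..N}.
      cdf (real_law M) (grid_point a b N k - \<eta>) - \<eta> \<le> cdf (real_law (L n)) (grid_point a b N k)
    \<and> cdf (real_law (L n)) (grid_point a b N k) \<le> cdf (real_law M) (grid_point a b N k + \<eta>) + \<eta>"
    by (intro eventually_ball_finite ballI eventually_cdf_near[OF lim L M \<eta>]) simp
  then show ?thesis
    by (rule eventually_mono)
       (use levy_close_if_grid[OF ab interval_cdf_cdf_real_law[OF L] interval_cdf_cdf_real_law[OF M] N mesh]
         in \<open>simp add: \<eta>_def\<close>)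
qed

lemma mono_diagonal_sequence:
  fixes P :: "nat \<Rightarrow> nat \<Rightarrow> bool"
  assumes P0: "\<And>n. P n 0" and P_Suc: "\<And>n m. P n m \<Longrightarrow> P (Suc n) m"
    and ev: "\<And>m. \<forall>\<^sub>F n in sequentially. P n m"
  obtains mm where "\<And>n. P n (mm n)" "mono mm" "filterlim mm at_top sequentially"
proof
  define mm where "mm n = (GREATEST m. m \<le> n \<and> P n m)" for n
  have P: "P n (mm n)" and le: "mm n \<le> n" for n
    using GreatestI_nat[of "\<lambda>m. m \<le> n \<and> P n m" 0 n] P0 unfolding mm_def by auto
  show "P n (mm n)" for n by (rule P)
  have ge: "m \<le> mm n" if "m \<le> n" "P n m" for n m
    unfolding mm_def by (rule Greatest_le_nat[of _ m n]) (use that in auto)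
  show "mono mm"
    unfolding mono_iff_le_Suc using P le by (intro allI ge P_Suc) (auto intro: le_SucI)
  show "filterlim mm at_top sequentially"
    unfolding filterlim_at_top
  proof
    fix m
    from ev[of m] have "\<forall>\<^sub>F n in sequentially. m \<le> n \<and> P n m"
      by (intro eventually_conj eventually_ge_at_top)
    then show "\<forall>\<^sub>F n in sequentially. m \<le> mm n" by eventually_elim (blast intro: ge)
  qed
qed

text \<open>The Levy distance of the \<open>n\<close>-th law to the limit is bounded by a single decreasing
  null sequence, chosen by diagonalisation over the tolerances \<open>1/(m+1)\<close>.\<close>
lemma levy_rate_exists:
  assumes ab: "a < b" and lim: "limitin (weak_top a b) L M sequentially"
    and L: "\<And>n. L n \<in> Delta a b" and M: "M \<in> Delta a b"
  shows "\<exists>d. (\<forall>n. 0 < d n) \<and> decseq d \<and> d \<longlonglongrightarrow> 0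
    \<and> (\<forall>n. levy_close (cdf (real_law (L n))) (cdf (real_law M)) (d n))"
proof -
  define P where "P n m \<longleftrightarrow> (\<forall>k\<ge>n. levy_close (cdf (real_law (L k))) (cdf (real_law M)) (inverse (real (Suc m))))"
    for n m
  have "\<forall>\<^sub>F n in sequentially. P n m" for m
    unfolding P_def by (rule eventually_all_ge_at_top) (rule eventually_levy_close[OF ab lim L M], simp)
  moreover have "P n 0" for n
    using levy_close_1[OF interval_cdf_cdf_real_law[OF L] interval_cdf_cdf_real_law[OF M]] by (simp add: P_def)
  moreover have "P n m \<Longrightarrow> P (Suc n) m" for n m by (simp add: P_def)
  ultimately obtain mm where mm: "\<And>n. P n (mm n)" "mono mm" "filterlim mm at_top sequentially"
    using mono_diagonal_sequence[of P] by blast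
  show ?thesis
  proof (intro exI conjI allI)
    show "0 < inverse (real (Suc (mm n)))" for n by simp
    show "decseq (\<lambda>n. inverse (real (Suc (mm n))))"
      using mm(2) unfolding decseq_def mono_def by (simp add: le_imp_inverse_le)
    show "(\<lambda>n. inverse (real (Suc (mm n)))) \<longlonglongrightarrow> 0"
      by (rule filterlim_compose[OF LIMSEQ_inverse_real_of_nat mm(3)])
    show "levy_close (cdf (real_law (L n))) (cdf (real_law M)) (inverse (real (Suc (mm n))))" for n
      using mm(1)[of n] unfolding P_def by simp
  qed
qed

section \<open>Squeezing in a single coordinate\<close>

lemma tendsto_at_right_shift:
  fixes G :: "real \<Rightarrow> real"
  assumes "continuous (at_right (t + d)) G"
  shows "((\<lambda>s. G (s + d)) \<longlongrightarrow> G (t + d)) (at_right t)"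
proof -
  have "((\<lambda>s. s + d) \<longlongrightarrow> t + d) (at_right t)" by (intro tendsto_intros)
  moreover have "\<forall>\<^sub>F s in at_right t. t + d < s + d"
    using eventually_at_right_less[of t] by eventually_elim simp
  ultimately have "filterlim (\<lambda>s. s + d) (at_right (t + d)) (at_right t)"
    by (rule tendsto_imp_filterlim_at_right)
  then show ?thesis using assms unfolding continuous_within by (rule filterlim_compose[rotated])
qed

definition levy_upper_cdf :: "real \<Rightarrow> real \<Rightarrow> (real \<Rightarrow> real) \<Rightarrow> real \<Rightarrow> real \<Rightarrow> real" where
  "levy_upper_cdf a b G d t = (if t < a then 0 else if b \<le> t then 1 else min 1 (G (t + d) + d))"

definition levy_lower_cdf :: "real \<Rightarrow> real \<Rightarrow> (real \<Rightarrow> real) \<Rightarrow> real \<Rightarrow> real \<Rightarrow> real" where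
  "levy_lower_cdf a b G d t = (if t < a then 0 else if b \<le> t then 1 else max 0 (G (t - d) - d))"

context
  fixes a b :: real and G :: "real \<Rightarrow> real"
  assumes ab: "a < b" and G: "interval_cdf a b G"
begin

lemma interval_cdf_levy_upper_cdf:
  assumes "0 \<le> d" shows "interval_cdf a b (levy_upper_cdf a b G d)"
  unfolding levy_upper_cdf_def[abs_def]
proof (rule interval_cdf_piecewise[OF ab])
  show "mono_on {a..<b} (\<lambda>t. min 1 (G (t + d) + d))"
    by (intro mono_onI min.mono add_right_mono interval_cdf_monoD[OF G]) auto
  show "0 \<le> min 1 (G (t + d) + d) \<and> min 1 (G (t + d) + d) \<le> 1" for t
    using interval_cdf_nonneg[OF G, of "t + d"] assms by simp
  show "((\<lambda>t. min 1 (G (t + d) + d)) \<longlongrightarrow> min 1 (G (t + d) + d)) (at_right t)" for t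
    using G unfolding interval_cdf_def by (intro tendsto_intros tendsto_at_right_shift) auto
qed

lemma interval_cdf_levy_lower_cdf:
  assumes "0 \<le> d" shows "interval_cdf a b (levy_lower_cdf a b G d)"
  unfolding levy_lower_cdf_def[abs_def]
proof (rule interval_cdf_piecewise[OF ab])
  show "mono_on {a..<b} (\<lambda>t. max 0 (G (t - d) - d))"
    by (intro mono_onI max.mono diff_right_mono interval_cdf_monoD[OF G]) auto
  show "0 \<le> max 0 (G (t - d) - d) \<and> max 0 (G (t - d) - d) \<le> 1" for t
    using interval_cdf_le_1[OF G, of "t - d"] assms by simp
  show "((\<lambda>t. max 0 (G (t - d) - d)) \<longlongrightarrow> max 0 (G (t - d) - d)) (at_right t)" for t
  proof (intro tendsto_intros)
    show "((\<lambda>t. G (t - d)) \<longlongrightarrow> G (t - d)) (at_right t)"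
      using G tendsto_at_right_shift[of t "- d" G] unfolding interval_cdf_def by simp
  qed
qed

lemma levy_upper_cdf_mono: "d' \<le> d \<Longrightarrow> levy_upper_cdf a b G d' t \<le> levy_upper_cdf a b G d t"
  unfolding levy_upper_cdf_def using interval_cdf_monoD[OF G, of "t + d'" "t + d"] by auto

lemma levy_lower_cdf_antimono: "d' \<le> d \<Longrightarrow> levy_lower_cdf a b G d t \<le> levy_lower_cdf a b G d' t"
  unfolding levy_lower_cdf_def using interval_cdf_monoD[OF G, of "t - d" "t - d'"] by auto

lemma
  assumes F: "interval_cdf a b F" and close: "levy_close F G d"
  shows le_levy_upper_cdf: "F t \<le> levy_upper_cdf a b G d t"
    and levy_lower_cdf_le: "levy_lower_cdf a b G d t \<le> F t"
  using close interval_cdf_outside[OF F, of t] interval_cdf_nonneg[OF F, of t] interval_cdf_le_1[OF F, of t]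
  unfolding levy_close_def levy_upper_cdf_def levy_lower_cdf_def by auto

lemma levy_upper_cdf_tendsto:
  assumes d: "\<And>n. 0 < d n" "d \<longlonglongrightarrow> 0"
  shows "(\<lambda>n. levy_upper_cdf a b G (d n) t) \<longlonglongrightarrow> G t"
proof (cases "a \<le> t \<and> t < b")
  case True
  have "(\<lambda>n. t + d n) \<longlonglongrightarrow> t + 0" by (intro tendsto_intros d)
  then have "filterlim (\<lambda>n. t + d n) (at_right t) sequentially"
    using d by (intro tendsto_imp_filterlim_at_right) auto
  moreover have "(G \<longlongrightarrow> G t) (at_right t)" using G unfolding interval_cdf_def continuous_within by blast
  ultimately have "(\<lambda>n. G (t + d n)) \<longlonglongrightarrow> G t" by (rule filterlim_compose[rotated])
  then have "(\<lambda>n. min 1 (G (t + d n) + d n)) \<longlonglongrightarrow> min 1 (G t + 0)"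
    by (intro tendsto_intros d)
  then show ?thesis using True interval_cdf_le_1[OF G, of t] by (simp add: levy_upper_cdf_def)
qed (use ab interval_cdf_outside[OF G] in \<open>auto simp: levy_upper_cdf_def\<close>)

lemma levy_lower_cdf_tendsto:
  assumes d: "d \<longlonglongrightarrow> 0" and cont: "isCont G t"
  shows "(\<lambda>n. levy_lower_cdf a b G (d n) t) \<longlonglongrightarrow> G t"
proof (cases "a \<le> t \<and> t < b")
  case True
  have "(\<lambda>n. t - d n) \<longlonglongrightarrow> t - 0" by (intro tendsto_intros d)
  then have "(\<lambda>n. G (t - d n)) \<longlonglongrightarrow> G t" using cont by (auto intro: isCont_tendsto_compose)
  then have "(\<lambda>n. max 0 (G (t - d n) - d n)) \<longlonglongrightarrow> max 0 (G t - 0)"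
    by (intro tendsto_intros d)
  then show ?thesis using True interval_cdf_nonneg[OF G, of t] by (simp add: levy_lower_cdf_def)
qed (use ab interval_cdf_outside[OF G] in \<open>auto simp: levy_lower_cdf_def\<close>)

end

text \<open>A larger distribution function belongs to a stochastically smaller law: lower laws come from
  upper distribution functions.\<close>
definition levy_lower_law :: "real \<Rightarrow> real \<Rightarrow> real measure \<Rightarrow> real \<Rightarrow> real measure" where
  "levy_lower_law a b M d = interval_law a b (levy_upper_cdf a b (cdf (real_law M)) d)"

definition levy_upper_law :: "real \<Rightarrow> real \<Rightarrow> real measure \<Rightarrow> real \<Rightarrow> real measure" where
  "levy_upper_law a b M d = interval_law a b (levy_lower_cdf a b (cdf (real_law M)) d)"

context
  fixes a b :: real and M :: "real measure"
  assumes ab: "a < b" and M: "M \<in> Delta a b"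
begin

lemma
  assumes "0 \<le> d"
  shows levy_lower_law_in_Delta: "levy_lower_law a b M d \<in> Delta a b"
    and levy_upper_law_in_Delta: "levy_upper_law a b M d \<in> Delta a b"
    and cdf_levy_lower_law: "cdf (real_law (levy_lower_law a b M d)) = levy_upper_cdf a b (cdf (real_law M)) d"
    and cdf_levy_upper_law: "cdf (real_law (levy_upper_law a b M d)) = levy_lower_cdf a b (cdf (real_law M)) d"
  using ab assms
  by (simp_all add: levy_lower_law_def levy_upper_law_def interval_law_in_Delta cdf_real_law_interval_law
      interval_cdf_levy_upper_cdf interval_cdf_levy_lower_cdf interval_cdf_cdf_real_law[OF M])

lemma
  assumes "0 \<le> d'" "d' \<le> d"
  shows fosd_levy_lower_law_mono: "fosd a b (levy_lower_law a b M d) (levy_lower_law a b M d')"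
    and fosd_levy_upper_law_antimono: "fosd a b (levy_upper_law a b M d') (levy_upper_law a b M d)"
  using ab assms
  by (auto intro!: fosd_if_cdf_le levy_lower_law_in_Delta levy_upper_law_in_Delta
      levy_upper_cdf_mono levy_lower_cdf_antimono interval_cdf_cdf_real_law[OF M]
      simp: cdf_levy_lower_law cdf_levy_upper_law)

lemma
  assumes N: "N \<in> Delta a b" and "0 \<le> d" and close: "levy_close (cdf (real_law N)) (cdf (real_law M)) d"
  shows fosd_levy_lower_law: "fosd a b (levy_lower_law a b M d) N"
    and fosd_levy_upper_law: "fosd a b N (levy_upper_law a b M d)"
  using ab assms
  by (auto intro!: fosd_if_cdf_le le_levy_upper_cdf levy_lower_cdf_le levy_lower_law_in_Delta
      levy_upper_law_in_Delta interval_cdf_cdf_real_law[OF M] interval_cdf_cdf_real_law[OF N]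
      simp: cdf_levy_lower_law cdf_levy_upper_law)

lemma
  assumes d: "\<And>n. 0 < d n" "d \<longlonglongrightarrow> 0"
  shows limitin_levy_lower_law: "limitin (weak_top a b) (\<lambda>n. levy_lower_law a b M (d n)) M sequentially"
    and limitin_levy_upper_law: "limitin (weak_top a b) (\<lambda>n. levy_upper_law a b M (d n)) M sequentially"
  using ab d levy_upper_cdf_tendsto[OF ab interval_cdf_cdf_real_law[OF M] d]
    levy_lower_cdf_tendsto[OF ab interval_cdf_cdf_real_law[OF M] d(2)]
  unfolding levy_lower_law_def levy_upper_law_def
  by (auto intro!: limitin_interval_law M less_imp_le
      interval_cdf_levy_upper_cdf interval_cdf_levy_lower_cdf interval_cdf_cdf_real_law[OF M])

end

section \<open>Order-dense countable approximation in a single coordinate\<close>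

definition grid_lower_law :: "real \<Rightarrow> real \<Rightarrow> real measure \<Rightarrow> nat \<Rightarrow> real measure" where
  "grid_lower_law a b M n = interval_law a b (grid_upper_cdf a b (cdf (real_law M)) (Suc n))"

definition grid_upper_law :: "real \<Rightarrow> real \<Rightarrow> real measure \<Rightarrow> nat \<Rightarrow> real measure" where
  "grid_upper_law a b M n = interval_law a b (grid_lower_cdf a b (cdf (real_law M)) (Suc n))"

lemma
  assumes ab: "a < b" and M: "M \<in> Delta a b"
  shows grid_lower_law_in_grid_laws: "grid_lower_law a b M n \<in> grid_laws a b \<inter> Delta a b"
    and grid_upper_law_in_grid_laws: "grid_upper_law a b M n \<in> grid_laws a b \<inter> Delta a b"
    and fosd_grid_lower_law: "fosd a b (grid_lower_law a b M n) M"
    and fosd_grid_upper_law: "fosd a b M (grid_upper_law a b M n)"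
    and limitin_grid_lower_law: "limitin (weak_top a b) (grid_lower_law a b M) M sequentially"
    and limitin_grid_upper_law: "limitin (weak_top a b) (grid_upper_law a b M) M sequentially"
proof -
  have ab': "a \<le> b" using ab by simp
  define F where "F = cdf (real_law M)"
  have F: "interval_cdf a b F" unfolding F_def by (rule interval_cdf_cdf_real_law[OF M])
  have up: "interval_cdf a b (grid_upper_cdf a b F (Suc n))"
    and lo: "interval_cdf a b (grid_lower_cdf a b F (Suc n))" for n
    by (simp_all add: interval_cdf_grid_upper_cdf[OF ab F] interval_cdf_grid_lower_cdf[OF ab F])
  note defs = grid_lower_law_def grid_upper_law_def F_def[symmetric]
  note cdfs = cdf_real_law_interval_law[OF ab' up] cdf_real_law_interval_law[OF ab' lo]
  show "grid_lower_law a b M n \<in> grid_laws a b \<inter> Delta a b"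
    "grid_upper_law a b M n \<in> grid_laws a b \<inter> Delta a b"
    unfolding defs
    by (simp_all add: interval_law_in_Delta[OF ab'] up lo interval_law_grid_upper_cdf_in_grid_laws[OF ab]
        interval_law_grid_lower_cdf_in_grid_laws[OF ab])
  show "fosd a b (grid_lower_law a b M n) M"
    unfolding defs by (rule fosd_if_cdf_le[OF interval_law_in_Delta[OF ab' up] M ab'])
      (simp add: cdfs F_def[symmetric] grid_upper_cdf_ge[OF ab F])
  show "fosd a b M (grid_upper_law a b M n)"
    unfolding defs by (rule fosd_if_cdf_le[OF M interval_law_in_Delta[OF ab' lo] ab'])
      (simp add: cdfs F_def[symmetric] grid_lower_cdf_le[OF ab F])
  show "limitin (weak_top a b) (grid_lower_law a b M) M sequentially"
    unfolding defs using grid_upper_cdf_tendsto[OF ab F]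
    by (intro limitin_interval_law[OF ab' M up]) (simp add: F_def)
  show "limitin (weak_top a b) (grid_upper_law a b M) M sequentially"
    unfolding defs using grid_lower_cdf_tendsto[OF ab F]
    by (intro limitin_interval_law[OF ab' M lo]) (simp add: F_def)
qed

section \<open>The product space\<close>

lemma topspace_Xtop: "topspace (Xtop a b S) = (\<Pi>\<^sub>E s\<in>S. Delta a b)"
  unfolding Xtop_def by (simp add: topspace_weak_top)

lemma limitin_XtopD:
  "limitin (Xtop a b S) xs x sequentially \<Longrightarrow> s \<in> S \<Longrightarrow> limitin (weak_top a b) (\<lambda>n. xs n s) (x s) sequentially"
  unfolding Xtop_def limitin_componentwise by blast

lemma limitin_Xtop_restrict:
  assumes x: "x \<in> topspace (Xtop a b S)" and f: "\<And>s n. s \<in> S \<Longrightarrow> f s n \<in> Delta a b"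
    and lim: "\<And>s. s \<in> S \<Longrightarrow> limitin (weak_top a b) (f s) (x s) sequentially"
  shows "limitin (Xtop a b S) (\<lambda>n. restrict (\<lambda>s. f s n) S) x sequentially"
  using x f lim unfolding Xtop_def limitin_componentwise topspace_Xtop[unfolded Xtop_def]
  by (auto simp: PiE_iff)

lemma squeezing_property_Xtop:
  assumes ab: "a < b" shows "squeezing_property a b S"
  unfolding squeezing_property_def
proof (intro allI impI, elim conjE)
  fix x xs assume xs: "\<forall>n. xs n \<in> topspace (Xtop a b S)" and x: "x \<in> topspace (Xtop a b S)"
    and lim: "limitin (Xtop a b S) xs x sequentially"
  have xsD: "xs n s \<in> Delta a b" and xD: "x s \<in> Delta a b" if "s \<in> S" for n s
    using xs x that by (auto simp: topspace_Xtop)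
  have "\<forall>s\<in>S. \<exists>d. (\<forall>n. 0 < d n) \<and> decseq d \<and> d \<longlonglongrightarrow> 0
      \<and> (\<forall>n. levy_close (cdf (real_law (xs n s))) (cdf (real_law (x s))) (d n))"
    using levy_rate_exists[OF ab limitin_XtopD[OF lim] xsD xD] by blast
  then obtain d where d: "\<And>s n. s \<in> S \<Longrightarrow> 0 < d s n" "\<And>s. s \<in> S \<Longrightarrow> decseq (d s)"
    "\<And>s. s \<in> S \<Longrightarrow> d s \<longlonglongrightarrow> 0"
    "\<And>s n. s \<in> S \<Longrightarrow> levy_close (cdf (real_law (xs n s))) (cdf (real_law (x s))) (d s n)"
    by metis
  have dSuc: "0 \<le> d s (Suc n) \<and> d s (Suc n) \<le> d s n" if "s \<in> S" for s n
    using d(1,2)[OF that] by (simp add: decseq_Suc_iff less_imp_le)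
  define xl where "xl n = restrict (\<lambda>s. levy_lower_law a b (x s) (d s n)) S" for n
  define xu where "xu n = restrict (\<lambda>s. levy_upper_law a b (x s) (d s n)) S" for n
  have "xl n \<in> topspace (Xtop a b S) \<and> xu n \<in> topspace (Xtop a b S)" for n
    using d(1) xD by (simp add: topspace_Xtop xl_def xu_def less_imp_le levy_lower_law_in_Delta[OF ab]
        levy_upper_law_in_Delta[OF ab])
  moreover have "xle a b S (xl n) (xl (Suc n)) \<and> xle a b S (xu (Suc n)) (xu n)
      \<and> xle a b S (xl n) (xs n) \<and> xle a b S (xs n) (xu n)" for n
    using xD xsD d(1,4) dSuc
    by (simp add: xle_def xl_def xu_def less_imp_le fosd_levy_lower_law_mono[OF ab]
        fosd_levy_upper_law_antimono[OF ab] fosd_levy_lower_law[OF ab] fosd_levy_upper_law[OF ab])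
  moreover have "limitin (Xtop a b S) xl x sequentially" "limitin (Xtop a b S) xu x sequentially"
    unfolding xl_def xu_def using xD d(1,3)
    by (auto intro!: limitin_Xtop_restrict[OF x] limitin_levy_lower_law[OF ab] limitin_levy_upper_law[OF ab]
        levy_lower_law_in_Delta[OF ab] levy_upper_law_in_Delta[OF ab] less_imp_le)
  ultimately show "\<exists>xl xu. (\<forall>n. xl n \<in> topspace (Xtop a b S) \<and> xu n \<in> topspace (Xtop a b S))
      \<and> (\<forall>n. xle a b S (xl n) (xl (Suc n))) \<and> (\<forall>n. xle a b S (xu (Suc n)) (xu n))
      \<and> (\<forall>n. xle a b S (xl n) (xs n) \<and> xle a b S (xs n) (xu n))
      \<and> limitin (Xtop a b S) xl x sequentially \<and> limitin (Xtop a b S) xu x sequentially"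
    by blast
qed

lemma
  assumes S: "finite S" and ab: "a < b"
  defines "B \<equiv> \<Pi>\<^sub>E s\<in>S. grid_laws a b \<inter> Delta a b"
  shows countable_grid_laws_Xtop: "countable B"
    and grid_laws_Xtop_subset: "B \<subseteq> topspace (Xtop a b S)"
    and grid_laws_Xtop_order_dense: "\<And>x V. x \<in> topspace (Xtop a b S) \<Longrightarrow> openin (Xtop a b S) V \<Longrightarrow> x \<in> V
      \<Longrightarrow> \<exists>x'\<in>B \<inter> V. \<exists>x''\<in>B \<inter> V. xle a b S x' x \<and> xle a b S x x''"
proof -
  show "countable B" unfolding B_def by (intro countable_PiE S countable_Int1 countable_grid_laws)
  show "B \<subseteq> topspace (Xtop a b S)" unfolding B_def topspace_Xtop by auto
  fix x V assume x: "x \<in> topspace (Xtop a b S)" and V: "openin (Xtop a b S) V" "x \<in> V"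
  have xD: "x s \<in> Delta a b" if "s \<in> S" for s using x that by (auto simp: topspace_Xtop)
  define xl where "xl n = restrict (\<lambda>s. grid_lower_law a b (x s) n) S" for n
  define xu where "xu n = restrict (\<lambda>s. grid_upper_law a b (x s) n) S" for n
  have "limitin (Xtop a b S) xl x sequentially"
    unfolding xl_def
    by (rule limitin_Xtop_restrict[OF x]) (use xD grid_lower_law_in_grid_laws[OF ab] limitin_grid_lower_law[OF ab] in auto)
  moreover have "limitin (Xtop a b S) xu x sequentially"
    unfolding xu_def
    by (rule limitin_Xtop_restrict[OF x]) (use xD grid_upper_law_in_grid_laws[OF ab] limitin_grid_upper_law[OF ab] in auto)
  ultimately have "\<forall>\<^sub>F n in sequentially. xl n \<in> V" "\<forall>\<^sub>F n in sequentially. xu n \<in> V"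
    using V by (simp_all add: limitin_def)
  then have "\<forall>\<^sub>F n in sequentially. xl n \<in> V \<and> xu n \<in> V" by (rule eventually_conj)
  then obtain n where "xl n \<in> V" "xu n \<in> V" unfolding eventually_sequentially by blast
  moreover have "xl n \<in> B" "xu n \<in> B" "xle a b S (xl n) x" "xle a b S x (xu n)"
    using xD grid_lower_law_in_grid_laws[OF ab] grid_upper_law_in_grid_laws[OF ab] fosd_grid_lower_law[OF ab] fosd_grid_upper_law[OF ab]
    by (simp_all add: B_def xl_def xu_def xle_def)
  ultimately show "\<exists>x'\<in>B \<inter> V. \<exists>x''\<in>B \<inter> V. xle a b S x' x \<and> xle a b S x x''" by blast
qed

theorem mainTheorem11:
  fixes a b :: real and S :: "'i set"
  assumes "finite S" and "S \<noteq> {}" and "a < b"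
  shows "squeezing_property a b S \<and>
    (\<exists>Pairs :: nat \<Rightarrow> ('i \<Rightarrow> real measure) set.
        (\<forall>i. \<exists>p q. p \<in> topspace (Xtop a b S) \<and> q \<in> topspace (Xtop a b S) \<and> Pairs i = {p, q})
      \<and> countable_order_property a b S Pairs)"
proof
  show "squeezing_property a b S" by (rule squeezing_property_Xtop[OF \<open>a < b\<close>])
  define B where "B = (\<Pi>\<^sub>E s\<in>S. grid_laws a b \<inter> Delta a b)"
  note countable = countable_grid_laws_Xtop[OF assms(1,3), folded B_def]
    and subset = grid_laws_Xtop_subset[OF assms(1,3), folded B_def]
    and dense = grid_laws_Xtop_order_dense[OF assms(1,3), folded B_def]
  have "restrict (\<lambda>s. return (restrict_space borel {a..b}) a) S \<in> topspace (Xtop a b S)"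
    using return_in_Delta \<open>a < b\<close> by (simp add: topspace_Xtop)
  then have "B \<noteq> {}" using dense[OF _ openin_topspace] by blast
  then have B: "B = range (from_nat_into B)" using range_from_nat_into[OF _ countable] by simp
  show "\<exists>Pairs. (\<forall>i. \<exists>p q. p \<in> topspace (Xtop a b S) \<and> q \<in> topspace (Xtop a b S) \<and> Pairs i = {p, q})
      \<and> countable_order_property a b S Pairs"
  \<comment> \<open>Only the countability of the union matters, so every pair may be degenerate.\<close>
  proof (intro exI[of _ "\<lambda>i. {from_nat_into B i}"] conjI allI)
    show "\<exists>p q. p \<in> topspace (Xtop a b S) \<and> q \<in> topspace (Xtop a b S) \<and> {from_nat_into B i} = {p, q}" for i
      using subset B by blast
    have U: "(\<Union>i. {from_nat_into B i}) = B" using B by blast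
    show "countable_order_property a b S (\<lambda>i. {from_nat_into B i})"
      unfolding countable_order_property_def U using dense by blast
  qed
qed

end
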